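(* Let $Z,X$ be real vector spaces, $\Omega\subseteq Z$ nonempty, $f:Z\to X$, and let $K\subseteq X$ be a nontrivial convex cone with a convex base $B$. If $x_0\in O^s$, then $x_0$ is a VH solution.
   Context: $X'$ is the algebraic dual of $X$. $K$ nontrivial means $K\ne\{0\}$, $K\ne X$. A base of $K$ is a set $B$ with $0\notin B$ such that each $k\in K\setminus\{0\}$ has a unique representation $k=tb$, $t>0$, $b\in B$. $K^{+s}:=\{l\in X':\ l(a)>0\ \forall a\in K\setminus\{0\}\}$. For $l\in X'$, $O_l$ is the set of minimizers of $x\mapsto l(f(x))$ over $\Omega$, and $O^s:=\{x_0\in\Omega:\ \exists l\in K^{+s} \text{ with } x_0\in O_l\}$. $cor(A):=\{x\in A:\ \forall x'\in X\ \exists \lambda'>0 \text{ with } x+\lambda x'\in A\ \forall\lambda\in[0,\lambda']\}$. $x_0\in\Omega$ is a VH solution if there is a pointed convex cone $C\subseteq X$ ($C\cap(-C)=\{0\}$) with $K\setminus\{0\}\subseteq cor(C)$ and $(f(\Omega)-f(x_0))\cap(-C)=\{0\}$. *)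

theory Defs
  imports "HOL-Analysis.Analysis"
begin

definition alg_dual :: "('x::real_vector \<Rightarrow> real) set" where
  "alg_dual = {l. linear l}"

definition nontrivial_cone :: "'x::real_vector set \<Rightarrow> bool" where
  "nontrivial_cone K \<longleftrightarrow> K \<noteq> {0} \<and> K \<noteq> UNIV"

definition is_base :: "'x::real_vector set \<Rightarrow> 'x set \<Rightarrow> bool" where
  "is_base K B \<longleftrightarrow> 0 \<notin> B \<and>
     (\<forall>k \<in> K - {0}. \<exists>!p. fst p > 0 \<and> snd p \<in> B \<and> k = fst p *\<^sub>R snd p)"

definition strict_pos_dual :: "'x::real_vector set \<Rightarrow> ('x \<Rightarrow> real) set" where
  "strict_pos_dual K = {l \<in> alg_dual. \<forall>a \<in> K - {0}. l a > 0}"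

definition O_l :: "('x::real_vector \<Rightarrow> real) \<Rightarrow> ('z \<Rightarrow> 'x) \<Rightarrow> 'z set \<Rightarrow> 'z set" where
  "O_l l f \<Omega> = {x \<in> \<Omega>. \<forall>y \<in> \<Omega>. l (f x) \<le> l (f y)}"

definition O_s :: "'x::real_vector set \<Rightarrow> ('z \<Rightarrow> 'x) \<Rightarrow> 'z set \<Rightarrow> 'z set" where
  "O_s K f \<Omega> = {x0 \<in> \<Omega>. \<exists>l \<in> strict_pos_dual K. x0 \<in> O_l l f \<Omega>}"

definition cor :: "'x::real_vector set \<Rightarrow> 'x set" where
  "cor A = {x \<in> A. \<forall>x'. \<exists>t'>0. \<forall>t\<in>{0..t'}. x + t *\<^sub>R x' \<in> A}"

definition VH_solution :: "'x::real_vector set \<Rightarrow> ('z \<Rightarrow> 'x) \<Rightarrow> 'z set \<Rightarrow> 'z \<Rightarrow> bool" where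
  "VH_solution K f \<Omega> x0 \<longleftrightarrow> x0 \<in> \<Omega> \<and>
     (\<exists>C. convex_cone C \<and> C \<inter> uminus ` C = {0} \<and> K - {0} \<subseteq> cor C \<and>
          (\<lambda>x. f x - f x0) ` \<Omega> \<inter> uminus ` C = {0})"

end

theory Submission
  imports Defs
begin

text \<open>If \<open>l\<close> is strictly positive on \<open>K - {0}\<close> and \<open>l \<circ> f\<close> is minimal at \<open>x0\<close>,
  take for \<open>C\<close> the open half-space \<open>{x. l x > 0}\<close> together with the origin. It is a
  pointed convex cone; every point of the open half-space lies in its core, since moving
  a little in any direction keeps \<open>l\<close> positive; and \<open>- C\<close> meets the differences
  \<open>f x - f x0\<close> only in \<open>0\<close>, because \<open>l (f x - f x0) \<ge> 0\<close>.\<close>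

definition positive_halfspace_cone :: "('x::real_vector \<Rightarrow> real) \<Rightarrow> 'x set" where
  "positive_halfspace_cone l = insert 0 {x. l x > 0}"

lemma convex_cone_positive_halfspace_cone:
  assumes "linear l"
  shows "convex_cone (positive_halfspace_cone l)"
  unfolding convex_cone_iff positive_halfspace_cone_def
  using assms by (auto simp: linear_0 linear_add linear_scale zero_less_mult_iff)

lemma positive_halfspace_cone_pointed:
  assumes "linear l"
  shows "positive_halfspace_cone l \<inter> uminus ` positive_halfspace_cone l = {0}"
  unfolding positive_halfspace_cone_def using assms by (auto simp: linear_neg)

lemma positive_halfspace_subset_cor:
  assumes "linear l"
  shows "{x. l x > 0} \<subseteq> cor (positive_halfspace_cone l)"
proof
  fix k assume "k \<in> {x. l x > 0}"
  then have lk: "l k > 0" by simp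
  have "\<exists>t'>0. \<forall>t\<in>{0..t'}. k + t *\<^sub>R x' \<in> positive_halfspace_cone l" for x'
  proof -
    define t' where "t' = l k / (\<bar>l x'\<bar> + 1)"
    have "l (k + t *\<^sub>R x') > 0" if t: "t \<in> {0..t'}" for t
    proof -
      have "t * \<bar>l x'\<bar> \<le> t' * \<bar>l x'\<bar>"
        using t by (simp add: mult_right_mono)
      also have "\<dots> < l k"
        using lk by (simp add: t'_def divide_less_eq)
      finally have "- (t * l x') < l k"
        using t abs_ge_minus_self[of "l x'"] mult_left_mono[of "- l x'" "\<bar>l x'\<bar>" t] by simp
      then show ?thesis
        using assms by (simp add: linear_add linear_scale)
    qed
    moreover have "t' > 0" using lk by (simp add: t'_def)
    ultimately show ?thesis
      by (auto simp: positive_halfspace_cone_def)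
  qed
  with lk show "k \<in> cor (positive_halfspace_cone l)"
    by (simp add: cor_def positive_halfspace_cone_def)
qed

lemma minimizer_image_disjoint_negative_cone:
  assumes "linear l" and "x0 \<in> O_l l f \<Omega>"
  shows "(\<lambda>x. f x - f x0) ` \<Omega> \<inter> uminus ` positive_halfspace_cone l = {0}"
proof -
  have "x0 \<in> \<Omega>" and "\<And>y. y \<in> \<Omega> \<Longrightarrow> l (f y - f x0) \<ge> 0"
    using assms by (auto simp: O_l_def linear_diff)
  then show ?thesis
    using assms(1) by (force simp: positive_halfspace_cone_def linear_neg)
qed

lemma O_s_imp_VH_solution:
  assumes "x0 \<in> O_s K f \<Omega>"
  shows "VH_solution K f \<Omega> x0"
proof -
  obtain l where "x0 \<in> \<Omega>" "linear l" "\<forall>a\<in>K - {0}. l a > 0" "x0 \<in> O_l l f \<Omega>"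
    using assms by (auto simp: O_s_def strict_pos_dual_def alg_dual_def)
  moreover from this have "K - {0} \<subseteq> cor (positive_halfspace_cone l)"
    using positive_halfspace_subset_cor by blast
  ultimately show ?thesis
    unfolding VH_solution_def
    by (metis convex_cone_positive_halfspace_cone positive_halfspace_cone_pointed
        minimizer_image_disjoint_negative_cone)
qed

theorem theorem4p16:
  fixes f :: "'z::real_vector \<Rightarrow> 'x::real_vector"
    and \<Omega> :: "'z set" and K B :: "'x set" and x0 :: 'z
  assumes "\<Omega> \<noteq> {}"
    and "convex_cone K" and "nontrivial_cone K"
    and "is_base K B" and "convex B"
    and "x0 \<in> O_s K f \<Omega>"
  shows "VH_solution K f \<Omega> x0"
  using assms(6) by (rule O_s_imp_VH_solution)

end
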